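(* Let $q$ be a prime. Let $c, k, M$ be positive integers with $c < M < q$, and let $A(X) \in \mathbb{F}_q[X]$ be a nonzero polynomial with $\deg(A) < cq$ and $\mathsf{pdeg}(A) < k$. Then $$\left|\{\alpha \in \mathbb{F}_q : \mathsf{mult}(A, \alpha) \geq M\}\right| \leq \min\left( \frac{c}{M - c + 1}\cdot k + c,\; k\right).$$
   Context: For $A(X) \in \mathbb{F}_q[X]$, $A^{[\ell]}(X)$ is the $\ell$-th Hasse derivative (the coefficient of $Z^\ell$ in $A(X+Z)$ expanded in powers of $Z$). With $\Lambda(X) = X^q - X$, the $\ell$-th pseudoderivative is $A_{\langle \ell \rangle}(X) = A^{[\ell]}(X) \bmod \Lambda(X)$, and the pseudodegree is $\mathsf{pdeg}(A) = \max_{\ell \geq 0}\deg(A_{\langle \ell\rangle})$. For nonzero $A$ and $\alpha \in \mathbb{F}_q$, $\mathsf{mult}(A,\alpha)$ is the largest $r$ such that $(X-\alpha)^r$ divides $A(X)$. *)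

theory Defs
  imports "HOL-Computational_Algebra.Polynomial"
begin

text \<open>The l-th Hasse derivative: the coefficient of Z^l in A(X+Z), where A(X+Z) is
  viewed as a polynomial in Z with coefficients in F[X].\<close>
definition hasse_deriv :: "nat \<Rightarrow> 'a::comm_ring_1 poly \<Rightarrow> 'a poly" where
  "hasse_deriv l A = coeff (pcompose (map_poly (\<lambda>a. [:a:]) A) [:[:0, 1:], 1:]) l"

definition Lam :: "nat \<Rightarrow> 'a::comm_ring_1 poly" where
  "Lam q = monom 1 q - [:0, 1:]"

definition pseudo_deriv :: "nat \<Rightarrow> nat \<Rightarrow> 'a::field poly \<Rightarrow> 'a poly" where
  "pseudo_deriv q l A = hasse_deriv l A mod Lam q"

definition pdeg :: "nat \<Rightarrow> 'a::field poly \<Rightarrow> nat" where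
  "pdeg q A = Max (range (\<lambda>l. degree (pseudo_deriv q l A)))"

end

theory Submission
  imports Defs "HOL-Computational_Algebra.Primes" "Jordan_Normal_Form.Determinant"
begin

text \<open>Write \<open>A = \<Sum>\<^bsub>j<c\<^esub> B\<^sub>j \<Lambda>\<^sup>j\<close> with \<open>deg B\<^sub>j < q\<close>. In characteristic \<open>q\<close>, modulo \<open>\<Lambda>\<close> the only
  Hasse derivative of order \<open>a < q\<close> of \<open>\<Lambda>\<^sup>j\<close> that survives is the one with \<open>a = j\<close>; hence for
  \<open>l < q\<close> the \<open>l\<close>-th pseudoderivative of \<open>A\<close> is \<open>\<Sum>\<^bsub>j\<le>l\<^esub> (-1)\<^sup>j B\<^sub>j\<^bsup>[l-j]\<^esup>\<close>, and induction on \<open>j\<close>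
  gives \<open>deg B\<^sub>j < k\<close>. The first nonzero \<open>B\<^sub>j\<close> is, up to sign, a pseudoderivative; it has degree
  below \<open>k\<close> and vanishes at every root of multiplicity \<open>\<ge> M > j\<close>, which gives the bound \<open>k\<close>.

  For the other bound, expanding \<open>\<Lambda>\<^sup>j = (X\<^sup>q - X)\<^sup>j\<close> gives \<open>A = \<Sum>\<^bsub>i<c\<^esub> X\<^bsup>qi\<^esup> P\<^sub>i\<close> with
  \<open>deg P\<^sub>i \<le> k + c - 2 - i\<close>. Polynomials with vanishing derivative act as constants. Choose a
  maximal family of \<open>r \<le> c\<close> of the \<open>P\<^sub>i\<close> with nonzero Hasse--Wronskian \<open>W\<close>, so that
  \<open>\<delta> A = \<Sum>\<^sub>j \<nu>\<^sub>j P\<^sub>j\<close> with constants \<open>\<delta> \<noteq> 0\<close> and \<open>\<nu>\<^sub>j\<close>, and take \<open>\<delta>\<close> of least degree. A root of \<open>A\<close>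
  of multiplicity \<open>\<ge> M\<close> is then either a root of multiplicity \<open>\<ge> q\<close> (there are fewer than \<open>c\<close>
  of these, as \<open>deg A < cq\<close>) or, by Cramer's rule, a root of \<open>W\<close> of multiplicity \<open>\<ge> M - r + 1\<close>.
  Since \<open>deg W \<le> r(k + c - 2) - r(r - 1)\<close>, counting gives \<open>(s - c)(M - c + 1) \<le> ck\<close>.\<close>

section \<open>Hasse derivatives\<close>

lemma map_poly_const_poly_add:
  "map_poly (\<lambda>a. [:a:]) (f + g) = map_poly (\<lambda>a. [:a:]) f + map_poly (\<lambda>a. [:a:]) g"
  by (rule poly_eqI) (simp add: coeff_map_poly)

lemma map_poly_const_poly_smult:
  fixes c :: "'a::comm_semiring_1"
  shows "map_poly (\<lambda>a. [:a:]) (Polynomial.smult c f) = Polynomial.smult [:c:] (map_poly (\<lambda>a. [:a:]) f)"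
  by (rule poly_eqI) (simp add: coeff_map_poly mult.commute)

lemma map_poly_const_poly_mult:
  fixes f g :: "'a::comm_semiring_1 poly"
  shows "map_poly (\<lambda>a. [:a:]) (f * g) = map_poly (\<lambda>a. [:a:]) f * map_poly (\<lambda>a. [:a:]) g"
  by (induct f) (auto simp: map_poly_pCons map_poly_const_poly_add map_poly_const_poly_smult)

definition hasse_series :: "'a::comm_ring_1 poly \<Rightarrow> 'a poly poly" where
  "hasse_series f = pcompose (map_poly (\<lambda>a. [:a:]) f) [:[:0, 1:], 1:]"

lemma coeff_hasse_series: "coeff (hasse_series f) l = hasse_deriv l f"
  by (simp add: hasse_deriv_def hasse_series_def)

lemma hasse_series_add: "hasse_series (f + g) = hasse_series f + hasse_series g"
  by (simp add: hasse_series_def map_poly_const_poly_add pcompose_add)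

lemma hasse_series_mult: "hasse_series (f * g) = hasse_series f * hasse_series g"
  by (simp add: hasse_series_def map_poly_const_poly_mult pcompose_mult)

lemma hasse_series_const [simp]: "hasse_series [:a:] = [:[:a:]:]"
  by (simp add: hasse_series_def map_poly_pCons)

lemma hasse_series_0 [simp]: "hasse_series 0 = 0"
  and hasse_series_1 [simp]: "hasse_series 1 = 1"
  using hasse_series_const[of 0] hasse_series_const[of 1] by (simp_all add: one_pCons)

lemma hasse_series_X: "hasse_series [:0, 1:] = [:[:0, 1:], 1:]"
  by (simp add: hasse_series_def map_poly_pCons pcompose_pCons)

lemma hasse_series_diff: "hasse_series (f - g) = hasse_series f - hasse_series g"
  by (metis add_diff_cancel hasse_series_add diff_add_cancel)

lemma hasse_series_power: "hasse_series (f ^ n) = hasse_series f ^ n"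
  by (induct n) (simp_all add: hasse_series_mult)

lemma hasse_series_sum: "hasse_series (sum g S) = (\<Sum>i\<in>S. hasse_series (g i))"
  by (induct S rule: infinite_finite_induct) (simp_all add: hasse_series_add)

lemma hasse_series_linear: "hasse_series [:a, 1:] = [:[:a, 1:], 1:]"
proof -
  have "[:a, 1:] = [:a:] + [:0, 1:]" by simp
  then show ?thesis by (simp only: hasse_series_add hasse_series_const hasse_series_X) simp
qed

lemma hasse_deriv_sum: "hasse_deriv l (sum g S) = (\<Sum>i\<in>S. hasse_deriv l (g i))"
  by (simp flip: coeff_hasse_series add: hasse_series_sum coeff_sum)

lemma hasse_deriv_mult:
  "hasse_deriv l (f * g) = (\<Sum>a\<le>l. hasse_deriv a f * hasse_deriv (l - a) g)"
  by (simp flip: coeff_hasse_series add: hasse_series_mult coeff_mult)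

lemma coeff_linear_poly_power:
  fixes c d :: "'a::comm_semiring_1"
  shows "coeff ([:c, d:] ^ n) l = of_nat (n choose l) * c ^ (n - l) * d ^ l"
proof (induct n arbitrary: l)
  case 0
  then show ?case by (cases l) auto
next
  case (Suc n)
  have power_Suc_eq: "[:c, d:] ^ Suc n
      = Polynomial.smult c ([:c, d:] ^ n) + pCons 0 (Polynomial.smult d ([:c, d:] ^ n))"
    by (simp add: algebra_simps pCons_eq_iff)
  show ?case
  proof (cases l)
    case 0
    then show ?thesis using Suc by (simp add: power_Suc_eq)
  next
    case (Suc m)
    show ?thesis
    proof (cases "m < n")
      case True
      then have "n - m = Suc (n - Suc m)" by simp
      then show ?thesis using Suc \<open>l = Suc m\<close>
        by (simp add: power_Suc_eq Suc.hyps algebra_simps)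
    next
      case False
      then show ?thesis using Suc \<open>l = Suc m\<close>
        by (cases "m = n") (auto simp: power_Suc_eq Suc.hyps algebra_simps binomial_eq_0)
    qed
  qed
qed

lemma hasse_series_eq_sum:
  "hasse_series f = (\<Sum>n\<le>degree f. [:[:coeff f n:]:] * [:[:0, 1:], 1:] ^ n)"
proof -
  have "monom (coeff f n) n = [:coeff f n:] * [:0, 1:] ^ n" for n
    by (simp add: monom_altdef)
  then have "hasse_series f = (\<Sum>n\<le>degree f. hasse_series ([:coeff f n:] * [:0, 1:] ^ n))"
    by (metis (no_types, lifting) hasse_series_sum poly_as_sum_of_monoms sum.cong)
  then show ?thesis
    by (simp only: hasse_series_mult hasse_series_power hasse_series_X hasse_series_const)
qed

lemma coeff_hasse_deriv:
  "coeff (hasse_deriv l f) m = of_nat ((m + l) choose l) * coeff f (m + l)"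
proof -
  have "hasse_deriv l f = (\<Sum>n\<le>degree f. monom (coeff f n * of_nat (n choose l)) (n - l))"
    by (simp flip: coeff_hasse_series
        add: hasse_series_eq_sum coeff_sum coeff_linear_poly_power of_nat_poly monom_altdef
        mult.commute)
  then have "coeff (hasse_deriv l f) m
      = (\<Sum>n\<le>degree f. coeff (monom (coeff f n * of_nat (n choose l)) (n - l)) m)"
    by (simp add: coeff_sum)
  also have "\<dots> = (\<Sum>n\<le>degree f. if n = m + l then coeff f n * of_nat (n choose l) else 0)"
    by (intro sum.cong refl) (auto simp: coeff_monom binomial_eq_0)
  also have "\<dots> = of_nat ((m + l) choose l) * coeff f (m + l)"
    by (auto simp: coeff_eq_0 not_le)
  finally show ?thesis .
qed

lemma hasse_deriv_0_left [simp]: "hasse_deriv 0 f = f"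
  by (rule poly_eqI) (simp add: coeff_hasse_deriv)

lemma hasse_deriv_0_right [simp]: "hasse_deriv l 0 = 0"
  by (rule poly_eqI) (simp add: coeff_hasse_deriv)

lemma degree_hasse_deriv_le: "degree (hasse_deriv l f) \<le> degree f - l"
  by (rule degree_le) (simp add: coeff_hasse_deriv coeff_eq_0)

lemma hasse_deriv_eq_0: "degree f < l \<Longrightarrow> hasse_deriv l f = 0"
  by (rule poly_eqI) (simp add: coeff_hasse_deriv coeff_eq_0)

lemma pderiv_hasse_deriv:
  "pderiv (hasse_deriv l f) = of_nat (Suc l) * hasse_deriv (Suc l) f"
proof (rule poly_eqI)
  fix m
  have "Suc m * (Suc (l + m) choose l) = Suc l * (Suc (l + m) choose Suc l)"
    using Suc_times_binomial_add[of l m] by simp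
  then have "of_nat (Suc m) * (of_nat (Suc (l + m) choose l) * coeff f (Suc (l + m)))
      = of_nat (Suc l) * (of_nat (Suc (l + m) choose Suc l) * coeff f (Suc (l + m)))"
    by (metis (no_types, lifting) mult.assoc of_nat_mult)
  then show "coeff (pderiv (hasse_deriv l f)) m = coeff (of_nat (Suc l) * hasse_deriv (Suc l) f) m"
    by (simp add: coeff_pderiv coeff_hasse_deriv of_nat_poly ac_simps)
qed

lemma hasse_deriv_linear_power:
  "hasse_deriv l ([:a, 1:] ^ n) = of_nat (n choose l) * [:a, 1:] ^ (n - l)"
  by (simp flip: coeff_hasse_series
      add: hasse_series_power hasse_series_linear coeff_linear_poly_power)

lemma power_dvd_hasse_deriv:
  assumes "[:a, 1:] ^ n dvd f"
  shows "[:a, 1:] ^ (n - l) dvd hasse_deriv l f"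
proof -
  obtain g where f: "f = [:a, 1:] ^ n * g" using assms by (elim dvdE)
  have "[:a, 1:] ^ (n - l) dvd of_nat (n choose b) * [:a, 1:] ^ (n - b) * hasse_deriv (l - b) g"
    if "b \<le> l" for b
    using that by (intro dvd_mult2 dvd_mult le_imp_power_dvd) simp
  then show ?thesis
    by (auto simp: f hasse_deriv_mult hasse_deriv_linear_power intro!: dvd_sum)
qed

lemma poly_hasse_deriv_eq_0:
  assumes "A \<noteq> 0" "l < order a A"
  shows "poly (hasse_deriv l A) a = 0"
proof -
  have "[:-a, 1:] ^ (order a A - l) dvd hasse_deriv l A"
    by (rule power_dvd_hasse_deriv) (rule order_1)
  moreover have "[:-a, 1:] dvd [:-a, 1:] ^ (order a A - l)"
    using assms(2) by (simp add: dvd_power)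
  ultimately show ?thesis
    by (meson dvd_trans poly_eq_0_iff_dvd)
qed

lemma degree_hasse_deriv_add_le:
  assumes "hasse_deriv l f \<noteq> 0"
  shows "degree (hasse_deriv l f) + l \<le> degree f"
proof -
  have "l \<le> degree f" using assms hasse_deriv_eq_0 not_le by blast
  then show ?thesis using degree_hasse_deriv_le[of l f] by linarith
qed

lemma pderiv_sum: "pderiv (sum f S) = (\<Sum>i\<in>S. pderiv (f i))"
  by (induct S rule: infinite_finite_induct) (auto simp: pderiv_add)

lemma degree_neg_one_power_mult: "degree ((-1) ^ j * p) = degree (p :: 'a::comm_ring_1 poly)"
  by (cases "even j") simp_all

section \<open>The Hasse--Wronskian\<close>

definition hasse_wronskian_mat :: "'a::comm_ring_1 poly list \<Rightarrow> 'a poly mat" where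
  "hasse_wronskian_mat G = mat (length G) (length G) (\<lambda>(l, j). hasse_deriv l (G ! j))"

definition hasse_wronskian :: "'a::comm_ring_1 poly list \<Rightarrow> 'a poly" where
  "hasse_wronskian G = det (hasse_wronskian_mat G)"

lemma hasse_wronskian_mat_carrier:
  "hasse_wronskian_mat G \<in> carrier_mat (length G) (length G)"
  by (simp add: hasse_wronskian_mat_def)

lemma hasse_wronskian_Nil: "hasse_wronskian [] = 1"
  by (simp add: hasse_wronskian_def hasse_wronskian_mat_def det_def)

lemma hasse_wronskian_mat_mult_vec:
  "hasse_wronskian_mat G *\<^sub>v vec (length G) u
     = vec (length G) (\<lambda>l. \<Sum>j\<in>{0..<length G}. hasse_deriv l (G ! j) * u j)"
  by (intro eq_vecI) (auto simp: hasse_wronskian_mat_def scalar_prod_def)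

lemma hasse_wronskian_nonzero_imp_independent:
  fixes G :: "'a::idom poly list"
  assumes "hasse_wronskian G \<noteq> 0"
    and "\<And>l. l < length G \<Longrightarrow> (\<Sum>j\<in>{0..<length G}. hasse_deriv l (G ! j) * u j) = 0"
  shows "\<forall>j<length G. u j = 0"
proof -
  have "hasse_wronskian_mat G *\<^sub>v vec (length G) u = 0\<^sub>v (length G)"
    using assms(2) by (intro eq_vecI) (simp_all add: hasse_wronskian_mat_mult_vec)
  then have "vec (length G) u = 0\<^sub>v (length G)"
    using det_0_iff_vec_prod_zero[OF hasse_wronskian_mat_carrier[of G]] assms(1)
      vec_carrier[of "length G" u]
    unfolding hasse_wronskian_def by blast
  then show ?thesis by (metis index_vec index_zero_vec(1))
qed

lemma degree_hasse_wronskian_le: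
  fixes G :: "'a::idom poly list"
  assumes "hasse_wronskian G \<noteq> 0"
    and degree_G: "\<And>j. j < length G \<Longrightarrow> degree (G ! j) \<le> e j"
  shows "degree (hasse_wronskian G) + (\<Sum>l<length G. l) \<le> (\<Sum>j<length G. e j)"
proof -
  define n where "n = length G"
  define summand where "summand p = signof p * (\<Prod>i<n. hasse_deriv i (G ! p i))" for p
  have det_eq: "hasse_wronskian G = (\<Sum>p\<in>{p. p permutes {..<n}}. summand p)"
    using det_def'[OF hasse_wronskian_mat_carrier, of G]
    by (simp add: hasse_wronskian_def summand_def n_def hasse_wronskian_mat_def atLeast0LessThan
        permutes_in_image)
  have summand_bound: "degree (summand p) + (\<Sum>l<n. l) \<le> (\<Sum>j<n. e j)"
    if p: "p permutes {..<n}" and nonzero: "summand p \<noteq> 0" for p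
  proof -
    have factor_nonzero: "hasse_deriv i (G ! p i) \<noteq> 0" if "i < n" for i
      using nonzero that by (auto simp: summand_def)
    have "degree (summand p) = degree (\<Prod>i<n. hasse_deriv i (G ! p i))"
      by (simp add: summand_def sign_def)
    then have "degree (summand p) + (\<Sum>l<n. l) = (\<Sum>i<n. degree (hasse_deriv i (G ! p i)) + i)"
      using factor_nonzero by (simp add: degree_prod_eq_sum_degree sum.distrib)
    also have "\<dots> \<le> (\<Sum>i<n. e (p i))"
      using factor_nonzero degree_G p permutes_in_image[OF p]
      by (intro sum_mono order.trans[OF degree_hasse_deriv_add_le]) (auto simp: n_def)
    also have "\<dots> = (\<Sum>j<n. e j)"
      using sum.permute[OF p, of e] by (simp add: comp_def)
    finally show ?thesis .
  qed
  obtain p0 where "p0 permutes {..<n}" "summand p0 \<noteq> 0"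
    using assms(1) det_eq by (metis (mono_tags, lifting) mem_Collect_eq sum.neutral)
  then have "(\<Sum>l<n. l) \<le> (\<Sum>j<n. e j)" using summand_bound by fastforce
  moreover have "degree (hasse_wronskian G) \<le> (\<Sum>j<n. e j) - (\<Sum>l<n. l)"
    unfolding det_eq
    by (rule degree_sum_le) (use summand_bound in \<open>fastforce simp: finite_permutations\<close>)+
  ultimately show ?thesis by (simp add: n_def)
qed

text \<open>Cramer's rule, in the form of a divisibility statement.\<close>
lemma dvd_mult_det_if_dvd_mult_vec:
  fixes A :: "'a::comm_ring_1 mat"
  assumes A: "A \<in> carrier_mat n n" and x: "x \<in> carrier_vec n" and "k < n"
    and dvd: "\<And>l. l < n \<Longrightarrow> D dvd (A *\<^sub>v x) $ l"
  shows "D dvd x $ k * det A"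
proof -
  define B where "B = replace_col A (A *\<^sub>v x) k"
  have B: "B \<in> carrier_mat n n" using A by (simp add: B_def replace_col_def)
  have "x $ k * det A = det B"
    using cramer_lemma_mat[OF A x \<open>k < n\<close>] by (simp add: B_def)
  also have "\<dots> = (\<Sum>i<n. B $$ (i, k) * cofactor B i k)"
    by (rule laplace_expansion_column[OF B \<open>k < n\<close>])
  also have "D dvd \<dots>"
    using dvd A \<open>k < n\<close> by (intro dvd_sum) (simp add: B_def replace_col_def)
  finally show ?thesis .
qed

text \<open>Differentiating the relation of row \<open>l\<close> and subtracting \<open>l + 1\<close> times that of row
  \<open>l + 1\<close> gives the same relations for the derivatives of the coefficients; eliminating \<open>p\<close>
  between the two systems shows that each ratio \<open>v\<^sub>j / w\<close> has derivative zero.\<close>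
lemma hasse_wronskian_relation_pderiv:
  fixes G :: "'a::idom poly list"
  assumes W_nonzero: "hasse_wronskian G \<noteq> 0"
    and rel: "\<And>l. l \<le> length G \<Longrightarrow>
      (\<Sum>j\<in>{0..<length G}. hasse_deriv l (G ! j) * v j) + hasse_deriv l p * w = 0"
    and "i < length G"
  shows "pderiv (v i) * w = pderiv w * v i"
proof -
  define n where "n = length G"
  define S where "S l u = (\<Sum>j\<in>{0..<n}. hasse_deriv l (G ! j) * u j)" for l u
  have rel_pderiv: "S l (\<lambda>j. pderiv (v j)) + hasse_deriv l p * pderiv w = 0" if "l < n" for l
  proof -
    have "0 = pderiv (S l v + hasse_deriv l p * w)" using rel that by (simp add: S_def n_def)
    also have "\<dots> = S l (\<lambda>j. pderiv (v j)) + hasse_deriv l p * pderiv w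
        + of_nat (Suc l) * (S (Suc l) v + hasse_deriv (Suc l) p * w)"
      by (simp add: S_def pderiv_sum pderiv_add pderiv_mult pderiv_hasse_deriv sum.distrib
          sum_distrib_left algebra_simps)
    finally show ?thesis using rel[of "Suc l"] that by (simp add: S_def n_def)
  qed
  have "S l (\<lambda>j. pderiv (v j) * w - pderiv w * v j) = 0" if "l < n" for l
  proof -
    have "S l (\<lambda>j. pderiv (v j) * w - pderiv w * v j)
        = w * S l (\<lambda>j. pderiv (v j)) - pderiv w * S l v"
      by (simp add: S_def sum_subtractf sum_distrib_left algebra_simps)
    also have "S l (\<lambda>j. pderiv (v j)) = - (hasse_deriv l p * pderiv w)"
      using rel_pderiv[OF that] by (simp add: eq_neg_iff_add_eq_0)
    also have "S l v = - (hasse_deriv l p * w)"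
      using rel[of l] that by (simp add: S_def n_def eq_neg_iff_add_eq_0)
    finally show ?thesis by (simp add: algebra_simps)
  qed
  then have "\<forall>j<n. pderiv (v j) * w - pderiv w * v j = 0"
    using hasse_wronskian_nonzero_imp_independent[OF W_nonzero,
        of "\<lambda>j. pderiv (v j) * w - pderiv w * v j"]
    by (simp add: S_def n_def)
  then show ?thesis using assms(3) by (simp add: n_def)
qed

lemma hasse_wronskian_append_eq_0_relation:
  fixes G :: "'a::idom poly list"
  assumes W_nonzero: "hasse_wronskian G \<noteq> 0" and "hasse_wronskian (G @ [p]) = 0"
  obtains v w where "w \<noteq> 0"
    and "\<And>l. l \<le> length G \<Longrightarrow>
      (\<Sum>j\<in>{0..<length G}. hasse_deriv l (G ! j) * v j) + hasse_deriv l p * w = 0"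
proof -
  define n where "n = length G"
  obtain x where x: "x \<in> carrier_vec (Suc n)" "x \<noteq> 0\<^sub>v (Suc n)"
    "hasse_wronskian_mat (G @ [p]) *\<^sub>v x = 0\<^sub>v (Suc n)"
    using det_0_iff_vec_prod_zero[OF hasse_wronskian_mat_carrier[of "G @ [p]"]] assms(2)
    by (auto simp: hasse_wronskian_def n_def)
  have x_eq: "x = vec (length (G @ [p])) (($) x)"
    using x(1) by (intro eq_vecI) (auto simp: n_def)
  have rel: "(\<Sum>j\<in>{0..<n}. hasse_deriv l (G ! j) * x $ j) + hasse_deriv l p * x $ n = 0"
    if "l \<le> n" for l
  proof -
    have "(\<Sum>j\<in>{0..<Suc n}. hasse_deriv l ((G @ [p]) ! j) * x $ j) = 0"
      using x(3) hasse_wronskian_mat_mult_vec[of "G @ [p]" "($) x"] that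
      by (subst (asm) x_eq) (auto simp: n_def dest!: arg_cong[where f="\<lambda>y. y $ l"])
    moreover have "(\<Sum>j\<in>{0..<n}. hasse_deriv l ((G @ [p]) ! j) * x $ j)
        = (\<Sum>j\<in>{0..<n}. hasse_deriv l (G ! j) * x $ j)"
      by (rule sum.cong) (auto simp: n_def nth_append)
    ultimately show ?thesis by (simp add: n_def)
  qed
  have "x $ n \<noteq> 0"
  proof
    assume "x $ n = 0"
    then have "\<forall>j<n. x $ j = 0"
      using hasse_wronskian_nonzero_imp_independent[OF W_nonzero] rel by (simp add: n_def)
    then have "x = 0\<^sub>v (Suc n)"
      using x(1) \<open>x $ n = 0\<close> by (intro eq_vecI) (auto simp: less_Suc_eq)
    with x(2) show False ..
  qed
  with rel show ?thesis by (intro that[of "x $ n" "($) x"]) (simp_all add: n_def)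
qed

section \<open>Representations over the constants\<close>

text \<open>In characteristic \<open>q\<close> the polynomials with vanishing derivative (those in \<open>'a[X\<^sup>q]\<close>)
  act as constants: they commute with Hasse derivatives of order below \<open>q\<close>.
  \<open>const_repr G h \<delta> \<nu>\<close> says \<open>h = (\<Sum>j. \<nu>\<^sub>j G\<^sub>j) / \<delta>\<close> with constant \<open>\<delta>\<close> and \<open>\<nu>\<^sub>j\<close>, i.e.\ \<open>h\<close> lies
  in the span of \<open>G\<close> over the field of fractions of the constants.\<close>
definition const_repr :: "'a::field poly list \<Rightarrow> 'a poly \<Rightarrow> 'a poly \<Rightarrow> (nat \<Rightarrow> 'a poly) \<Rightarrow> bool"
  where "const_repr G h \<delta> \<nu> \<longleftrightarrow> \<delta> \<noteq> 0 \<and> pderiv \<delta> = 0 \<and> (\<forall>j<length G. pderiv (\<nu> j) = 0) \<and>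
     \<delta> * h = (\<Sum>j\<in>{0..<length G}. \<nu> j * G ! j)"

lemma const_repr_0: "const_repr G 0 1 (\<lambda>j. 0)"
  by (simp add: const_repr_def)

lemma const_repr_nth:
  assumes "i < length G"
  shows "const_repr G (G ! i) 1 (\<lambda>j. if j = i then 1 else 0)"
proof -
  have "(\<Sum>j\<in>{0..<length G}. (if j = i then 1 else 0) * G ! j)
      = (\<Sum>j\<in>{0..<length G}. if j = i then G ! j else 0)"
    by (rule sum.cong) auto
  then show ?thesis using assms by (simp add: const_repr_def)
qed

lemma const_repr_add:
  assumes "const_repr G h1 \<delta>1 \<nu>1" "const_repr G h2 \<delta>2 \<nu>2"
  shows "const_repr G (h1 + h2) (\<delta>1 * \<delta>2) (\<lambda>j. \<delta>2 * \<nu>1 j + \<delta>1 * \<nu>2 j)"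
proof -
  have "\<delta>1 * \<delta>2 * (h1 + h2) = \<delta>2 * (\<delta>1 * h1) + \<delta>1 * (\<delta>2 * h2)" by (simp add: algebra_simps)
  also have "\<dots> = (\<Sum>j\<in>{0..<length G}. (\<delta>2 * \<nu>1 j + \<delta>1 * \<nu>2 j) * G ! j)"
    using assms by (simp add: const_repr_def sum_distrib_left sum.distrib algebra_simps)
  finally show ?thesis using assms by (auto simp: const_repr_def pderiv_mult pderiv_add)
qed

lemma const_repr_const_mult:
  assumes "pderiv z = 0" "const_repr G h \<delta> \<nu>"
  shows "const_repr G (z * h) \<delta> (\<lambda>j. z * \<nu> j)"
proof -
  have "\<delta> * (z * h) = z * (\<delta> * h)" by (simp add: ac_simps)
  also have "\<dots> = (\<Sum>j\<in>{0..<length G}. z * \<nu> j * G ! j)"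
    using assms(2) by (simp add: const_repr_def sum_distrib_left mult.assoc)
  finally show ?thesis using assms by (simp add: const_repr_def pderiv_mult)
qed

lemma pderiv_linear_power_mult_eq_0D:
  fixes h :: "'a::field poly"
  assumes "pderiv ([:-a, 1:] ^ m * h) = 0" and "poly h a \<noteq> 0"
  shows "of_nat m = (0::'a) \<and> pderiv h = 0"
proof (cases m)
  case 0
  then show ?thesis using assms(1) by simp
next
  case (Suc m')
  have "pderiv ([:-a, 1:] ^ m * h) = [:-a, 1:] ^ Suc m' * pderiv h
      + h * (Polynomial.smult (of_nat (Suc m')) ([:-a, 1:] ^ m') * 1)"
    unfolding Suc pderiv_mult pderiv_power_Suc by (simp add: pderiv_pCons)
  also have "\<dots> = [:-a, 1:] ^ m' * (Polynomial.smult (of_nat m) h + [:-a, 1:] * pderiv h)"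
    by (simp add: Suc algebra_simps)
  finally have "[:-a, 1:] ^ m' * (Polynomial.smult (of_nat m) h + [:-a, 1:] * pderiv h) = 0"
    using assms(1) by simp
  then have h_eq: "Polynomial.smult (of_nat m) h + [:-a, 1:] * pderiv h = 0"
    by simp
  have "of_nat m * poly h a = poly (Polynomial.smult (of_nat m) h + [:-a, 1:] * pderiv h) a"
    by simp
  then have "of_nat m * poly h a = 0"
    by (simp only: h_eq poly_0)
  with assms(2) have "of_nat m = (0::'a)" by simp
  moreover from h_eq this have "[:-a, 1:] * pderiv h = 0" by simp
  moreover have "[:-a, 1:] \<noteq> (0::'a poly)" by simp
  ultimately show ?thesis using no_zero_divisors by blast
qed

section \<open>Finite fields, \<open>\<Lambda>\<close> and pseudoderivatives\<close>

lemma CHAR_finite_field: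
  assumes "prime q" and "card (UNIV :: 'a::{field,finite} set) = q"
  shows "CHAR('a) = q"
proof -
  have "(\<Sum>x\<in>(UNIV::'a set). x + 1) = (\<Sum>x\<in>UNIV. x)"
    by (rule sum.reindex_bij_witness[where i="\<lambda>x. x - 1" and j="\<lambda>x. x + 1"]) auto
  then have "of_nat q = (0::'a)"
    using assms(2) by (simp add: sum.distrib)
  then have "CHAR('a) dvd q" by (simp add: of_nat_eq_0_iff_char_dvd)
  with assms(1) show ?thesis
    by (metis CHAR_not_1' One_nat_def prime_nat_iff)
qed

lemma power_card_UNIV_eq_self:
  assumes "card (UNIV :: 'a::{field,finite} set) = q"
  shows "(x::'a) ^ q = x"
proof -
  have "q \<noteq> 0" using assms by (metis card_0_eq finite_UNIV UNIV_not_empty)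
  moreover have "x ^ (q - 1) = 1" if "x \<noteq> 0"
  proof -
    have "(\<Prod>y\<in>UNIV - {0}. x * y) = (\<Prod>y\<in>UNIV - {0::'a}. y)"
      by (rule prod.reindex_bij_witness[of _ "\<lambda>y. y / x" "\<lambda>y. x * y"]) (use that in auto)
    then show ?thesis
      using assms by (simp add: prod.distrib card_Diff_singleton)
  qed
  ultimately show ?thesis
    by (cases "x = 0") (simp_all add: power_eq_if)
qed

lemma prime_dvd_choose:
  assumes "prime q" "0 < a" "a < q" "q dvd m"
  shows "q dvd (m choose a)"
proof -
  have "q dvd a * (m choose a)"
    using times_binomial_minus1_eq[OF assms(2)] assms(4) by simp
  moreover have "\<not> q dvd a" using assms(2,3) by (simp add: nat_dvd_not_less)
  ultimately show ?thesis using assms(1) prime_dvd_mult_iff by blast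
qed

lemma degree_Lam: "2 \<le> q \<Longrightarrow> degree (Lam q :: 'a::comm_ring_1 poly) = q"
  unfolding Lam_def diff_conv_add_uminus
  by (subst degree_add_eq_left) (auto simp: degree_monom_eq)

lemma Lam_nonzero: "2 \<le> q \<Longrightarrow> Lam q \<noteq> (0 :: 'a::comm_ring_1 poly)"
  using degree_Lam[of q] by (metis degree_0 not_numeral_le_zero)

lemma poly_Lam: "poly (Lam q) x = x ^ q - x"
  by (simp add: Lam_def poly_monom)

lemma dvd_power_add_diff_power: "w dvd (u + w) ^ n - (u ^ n :: 'a::comm_ring_1)"
proof (cases n)
  case (Suc m)
  then show ?thesis
    using diff_power_eq_sum[of "u + w" m u] by (metis add_diff_cancel_left' dvd_triv_left)
qed simp

lemma poly_adic_expansion: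
  fixes A L :: "'a::field poly"
  shows "A = (\<Sum>j<n. (A div L ^ j) mod L * L ^ j) + A div L ^ n * L ^ n"
proof (induct n)
  case (Suc n)
  have "A div L ^ Suc n = A div L ^ n div L"
    by (simp only: power_Suc2 poly_div_mult_right)
  then have "A div L ^ n = A div L ^ Suc n * L + (A div L ^ n) mod L"
    by (simp only: div_mult_mod_eq)
  then have "A div L ^ n * L ^ n = (A div L ^ Suc n * L + (A div L ^ n) mod L) * L ^ n"
    by (rule arg_cong)
  also have "\<dots> = (A div L ^ n) mod L * L ^ n + A div L ^ Suc n * L ^ Suc n"
    by (simp add: algebra_simps)
  finally show ?case using Suc by (simp add: add.assoc)
qed simp

lemma degree_mod_Lam_less:
  assumes "2 \<le> q"
  shows "degree (p mod Lam q :: 'a::field poly) < q"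
proof (cases "p mod Lam q = 0")
  case False
  then show ?thesis
    using degree_mod_less'[OF Lam_nonzero[OF assms] False] degree_Lam[OF assms, where 'a='a]
    by simp
qed (use assms in simp)

lemma degree_pseudo_deriv_le_pdeg:
  assumes "2 \<le> q"
  shows "degree (pseudo_deriv q l (A :: 'a::field poly)) \<le> pdeg q A"
proof -
  have "range (\<lambda>l. degree (pseudo_deriv q l A)) \<subseteq> {..<q}"
    using degree_mod_Lam_less[OF assms] by (auto simp: pseudo_deriv_def)
  then have "finite (range (\<lambda>l. degree (pseudo_deriv q l A)))"
    by (rule finite_subset) simp
  then show ?thesis unfolding pdeg_def by (rule Max_ge) simp
qed

lemma poly_pseudo_deriv:
  assumes "card (UNIV :: 'a::{field,finite} set) = q"
  shows "poly (pseudo_deriv q l A) (a::'a) = poly (hasse_deriv l A) a"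
proof -
  have "poly (Lam q) a = 0" by (simp add: poly_Lam power_card_UNIV_eq_self[OF assms])
  have "hasse_deriv l A = hasse_deriv l A div Lam q * Lam q + pseudo_deriv q l A"
    by (simp add: pseudo_deriv_def)
  then have "poly (hasse_deriv l A) a = poly (hasse_deriv l A div Lam q * Lam q + pseudo_deriv q l A) a"
    by (rule arg_cong)
  then show ?thesis
    by (simp only: poly_add poly_mult \<open>poly (Lam q) a = 0\<close> mult_zero_right add_0_left)
qed

section \<open>Polynomials in prime characteristic\<close>

context
  fixes q :: nat
  assumes prime_q: "prime q" and CHAR_eq: "CHAR('a::field) = q"
begin

lemma of_nat_eq_0_iff_dvd: "of_nat n = (0::'a) \<longleftrightarrow> q dvd n"
  using of_nat_eq_0_iff_char_dvd CHAR_eq by metis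

lemma hasse_deriv_eq_0_if_pderiv_eq_0:
  assumes "pderiv (g::'a poly) = 0" "0 < a" "a < q"
  shows "hasse_deriv a g = 0"
proof (rule poly_eqI)
  fix m
  have "q dvd (m + a) choose a" if "coeff g (m + a) \<noteq> 0"
  proof -
    obtain n where n: "m + a = Suc n" using assms(2) by (cases "m + a") auto
    have "of_nat (Suc n) * coeff g (Suc n) = 0"
      using assms(1) by (metis coeff_pderiv coeff_0)
    then have "q dvd Suc n"
      using that n by (metis mult_eq_0_iff of_nat_eq_0_iff_dvd)
    then have "q dvd m + a" by (simp only: n)
    then show ?thesis using prime_dvd_choose prime_q assms by blast
  qed
  then show "coeff (hasse_deriv a g) m = coeff 0 m"
    by (auto simp: coeff_hasse_deriv of_nat_eq_0_iff_dvd)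
qed

lemma hasse_deriv_mult_if_pderiv_eq_0:
  assumes "pderiv (g::'a poly) = 0" "l < q"
  shows "hasse_deriv l (g * f) = g * hasse_deriv l f"
proof -
  have "hasse_deriv l (g * f) = (\<Sum>a\<le>l. if a = 0 then g * hasse_deriv l f else 0)"
    unfolding hasse_deriv_mult
    by (rule sum.cong) (use assms hasse_deriv_eq_0_if_pderiv_eq_0 in auto)
  then show ?thesis by simp
qed

lemma pderiv_power_char: "pderiv ((p::'a poly) ^ q) = 0"
  by (simp add: pderiv_power of_nat_eq_0_iff_dvd)

lemma pderiv_eq_0_imp_root_power_factor:
  assumes "pderiv (f::'a poly) = 0" and "poly f a = 0"
  obtains g where "f = [:-a, 1:] ^ q * g" and "pderiv g = 0"
proof (cases "f = 0")
  case True
  then show ?thesis using that[of 0] by simp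
next
  case False
  define m where "m = order a f"
  obtain h where f: "f = [:-a, 1:] ^ m * h" and "\<not> [:-a, 1:] dvd h"
    using order_decomp[OF False] m_def by blast
  then have "poly h a \<noteq> 0" by (simp add: poly_eq_0_iff_dvd)
  then have "of_nat m = (0::'a)" "pderiv h = 0"
    using pderiv_linear_power_mult_eq_0D assms(1) f by blast+
  then have "q dvd m" by (simp add: of_nat_eq_0_iff_dvd)
  moreover have "m \<noteq> 0" using assms(2) False order_root m_def by blast
  ultimately have "q \<le> m" by (simp add: dvd_imp_le)
  show ?thesis
  proof (rule that)
    show "f = [:-a, 1:] ^ q * ([:-a, 1:] ^ (m - q) * h)"
      using \<open>q \<le> m\<close> by (simp add: f flip: power_add mult.assoc)
    have "of_nat (m - q) = (0::'a)"
      using \<open>q dvd m\<close> by (simp add: of_nat_eq_0_iff_dvd dvd_diff_nat)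
    then show "pderiv ([:-a, 1:] ^ (m - q) * h) = 0"
      by (simp add: pderiv_mult pderiv_power \<open>pderiv h = 0\<close>)
  qed
qed

lemma hasse_series_monom_char: "hasse_series (monom 1 q :: 'a poly) = [:monom 1 q:] + monom 1 q"
proof -
  have "hasse_series (monom 1 q :: 'a poly) = ([:[:0, 1:]:] + [:0, 1:]) ^ q"
    by (simp add: monom_altdef hasse_series_power hasse_series_X)
  also have "\<dots> = [:[:0, 1:]:] ^ q + [:0, 1:] ^ q"
    by (rule freshmans_dream) (use prime_q CHAR_eq in simp_all)
  also have "\<dots> = [:monom 1 q:] + monom 1 q"
    by (simp add: poly_const_pow monom_altdef)
  finally show ?thesis .
qed

text \<open>\<open>\<Lambda>(X + Z) = \<Lambda>(X) - Z + Z\<^sup>q\<close>: modulo \<open>\<Lambda>\<close> and \<open>Z\<^sup>q\<close>, \<open>\<Lambda>\<^sup>j(X + Z)\<close> is \<open>(-Z)\<^sup>j\<close>, so the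
  only Hasse derivative of order below \<open>q\<close> of \<open>\<Lambda>\<^sup>j\<close> that is not a multiple of \<open>\<Lambda>\<close> is the
  \<open>j\<close>-th one.\<close>
lemma hasse_series_Lam: "hasse_series (Lam q :: 'a poly) = [:Lam q, -1:] + monom 1 q"
proof -
  have "hasse_series (Lam q :: 'a poly) = [:monom 1 q:] + monom 1 q - [:[:0, 1:], 1:]"
    by (simp only: Lam_def hasse_series_diff hasse_series_monom_char hasse_series_X)
  then show ?thesis by (simp add: Lam_def)
qed

lemma hasse_deriv_Lam_power:
  assumes "a < q"
  shows "hasse_deriv a (Lam q ^ j :: 'a poly) = of_nat (j choose a) * (-1) ^ a * Lam q ^ (j - a)"
proof -
  obtain R where "([:Lam q, -1:] + monom 1 q) ^ j - [:Lam q :: 'a poly, -1:] ^ j = monom 1 q * R"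
    using dvd_power_add_diff_power[of "monom 1 q" "[:Lam q, -1:]" j] by (elim dvdE)
  then have R: "([:Lam q, -1:] + monom 1 q) ^ j = [:Lam q, -1:] ^ j + monom 1 q * R"
    by (simp add: diff_eq_eq add.commute)
  have "hasse_deriv a (Lam q ^ j) = coeff ([:Lam q, -1:] ^ j) a + coeff (monom 1 q * R) a"
    by (simp flip: coeff_hasse_series add: hasse_series_power hasse_series_Lam R)
  also have "coeff (monom 1 q * R) a = 0" using assms by (simp add: coeff_monom_mult)
  finally show ?thesis by (simp add: coeff_linear_poly_power ac_simps)
qed

lemma Lam_dvd_hasse_deriv_Lam_power_mult:
  assumes "l < q"
  shows "Lam q dvd hasse_deriv l (Lam q ^ j * B)
           - (if j \<le> l then (-1) ^ j * hasse_deriv (l - j) B else (0 :: 'a poly))"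
proof -
  define F where "F a = of_nat (j choose a) * (-1) ^ a * Lam q ^ (j - a) * hasse_deriv (l - a) B"
    for a
  have "hasse_deriv l (Lam q ^ j * B) = (\<Sum>a\<le>l. F a)"
    unfolding hasse_deriv_mult F_def
    by (rule sum.cong) (use assms in \<open>auto simp: hasse_deriv_Lam_power\<close>)
  also have "\<dots> = (\<Sum>a\<in>{..l} - {j}. F a) + (if j \<le> l then F j else 0)"
    by (simp add: sum.remove[of "{..l}" j] add.commute)
  also have "F j = (-1) ^ j * hasse_deriv (l - j) B" by (simp add: F_def)
  finally have "hasse_deriv l (Lam q ^ j * B)
      - (if j \<le> l then (-1) ^ j * hasse_deriv (l - j) B else 0) = (\<Sum>a\<in>{..l} - {j}. F a)"
    by simp
  moreover have "Lam q dvd F a" if "a \<noteq> j" for a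
  proof (cases "a < j")
    case True
    then show ?thesis by (simp add: F_def dvd_power)
  next
    case False
    with that show ?thesis by (simp add: F_def binomial_eq_0)
  qed
  ultimately show ?thesis by (auto intro!: dvd_sum)
qed

lemma of_nat_pred_char: "of_nat (q - 1) = (-1 :: 'a)"
proof -
  have "of_nat (q - 1) + 1 = (of_nat q :: 'a)"
    using prime_gt_0_nat[OF prime_q] by (simp add: of_nat_diff)
  also have "\<dots> = 0" using CHAR_eq by (metis of_nat_CHAR)
  finally show ?thesis by (simp add: eq_neg_iff_add_eq_0)
qed

text \<open>The quotient rule for \<open>(v/w)' = 0\<close>, after clearing the denominator by \<open>w\<^sup>q\<close>.\<close>
lemma pderiv_mult_power_pred_eq_0:
  assumes "pderiv v * w = pderiv w * (v :: 'a poly)"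
  shows "pderiv (v * w ^ (q - 1)) = 0"
proof -
  define m where "m = q - 2"
  have m: "q - 1 = Suc m" using prime_ge_2_nat[OF prime_q] by (simp add: m_def)
  have minus_one: "of_nat (Suc m) = (-1 :: 'a)" using of_nat_pred_char unfolding m .
  have power: "pderiv (w ^ Suc m) = - (w ^ m * pderiv w)"
    unfolding pderiv_power_Suc minus_one by simp
  have "pderiv (v * w ^ Suc m) = v * - (w ^ m * pderiv w) + w ^ Suc m * pderiv v"
    by (simp only: pderiv_mult power)
  also have "\<dots> = w ^ m * (pderiv v * w - pderiv w * v)"
    by (simp add: algebra_simps)
  finally show ?thesis using assms unfolding m by simp
qed

lemma const_repr_if_hasse_wronskian_append_eq_0:
  fixes G :: "'a poly list"
  assumes W_nonzero: "hasse_wronskian G \<noteq> 0" and "hasse_wronskian (G @ [p]) = 0"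
  shows "\<exists>\<delta> \<nu>. const_repr G p \<delta> \<nu>"
proof -
  obtain v w where "w \<noteq> 0" and rel: "\<And>l. l \<le> length G \<Longrightarrow>
      (\<Sum>j\<in>{0..<length G}. hasse_deriv l (G ! j) * v j) + hasse_deriv l p * w = 0"
    using hasse_wronskian_append_eq_0_relation[OF assms] by blast
  have "const_repr G p (w ^ q) (\<lambda>j. - (v j * w ^ (q - 1)))"
    unfolding const_repr_def
  proof (intro conjI allI impI)
    show "w ^ q \<noteq> 0" using \<open>w \<noteq> 0\<close> by simp
    show "pderiv (w ^ q) = 0" by (rule pderiv_power_char)
    show "pderiv (- (v j * w ^ (q - 1))) = 0" if "j < length G" for j
      using pderiv_mult_power_pred_eq_0[OF hasse_wronskian_relation_pderiv[OF W_nonzero rel that]]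
      by (simp add: pderiv_minus)
    have "w ^ q = w ^ (q - 1) * w"
      using prime_gt_0_nat[OF prime_q] by (simp flip: power_Suc2)
    then have "w ^ q * p = w ^ (q - 1) * (w * p)" by simp
    also have "w * p = - (\<Sum>j\<in>{0..<length G}. G ! j * v j)"
      using rel[of 0] by (simp add: eq_neg_iff_add_eq_0 mult.commute add.commute)
    finally show "w ^ q * p = (\<Sum>j\<in>{0..<length G}. - (v j * w ^ (q - 1)) * G ! j)"
      by (simp add: sum_distrib_left sum_negf algebra_simps)
  qed
  then show ?thesis by blast
qed

lemma common_root_power_factor:
  assumes "\<And>j. j < n \<Longrightarrow> pderiv (\<nu> j :: 'a poly) = 0 \<and> poly (\<nu> j) a = 0"
  obtains g where "\<And>j. j < n \<Longrightarrow> \<nu> j = [:-a, 1:] ^ q * g j \<and> pderiv (g j) = 0"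
proof -
  have "\<forall>j<n. \<exists>g. \<nu> j = [:-a, 1:] ^ q * g \<and> pderiv g = 0"
  proof (intro allI impI)
    fix j assume "j < n"
    then have "pderiv (\<nu> j) = 0" "poly (\<nu> j) a = 0" using assms by auto
    then obtain g where "\<nu> j = [:-a, 1:] ^ q * g" "pderiv g = 0"
      by (rule pderiv_eq_0_imp_root_power_factor)
    then show "\<exists>g. \<nu> j = [:-a, 1:] ^ q * g \<and> pderiv g = 0" by (intro exI conjI)
  qed
  then obtain g where "\<forall>j<n. \<nu> j = [:-a, 1:] ^ q * g j \<and> pderiv (g j) = 0"
    unfolding choice_iff' ..
  then show ?thesis by (intro that[of g]) simp
qed

lemma const_repr_hasse_deriv:
  fixes G :: "'a poly list"
  assumes "const_repr G h \<delta> \<nu>" and "l < q"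
  shows "(\<Sum>j\<in>{0..<length G}. hasse_deriv l (G ! j) * \<nu> j) = \<delta> * hasse_deriv l h"
proof -
  have "pderiv \<delta> = 0" using assms(1) by (simp add: const_repr_def)
  then have "\<delta> * hasse_deriv l h = hasse_deriv l (\<delta> * h)"
    using hasse_deriv_mult_if_pderiv_eq_0 assms(2) by simp
  also have "\<dots> = (\<Sum>j\<in>{0..<length G}. hasse_deriv l (\<nu> j * G ! j))"
    using assms(1) by (simp add: const_repr_def hasse_deriv_sum)
  also have "\<dots> = (\<Sum>j\<in>{0..<length G}. hasse_deriv l (G ! j) * \<nu> j)"
    using assms by (intro sum.cong) (auto simp: const_repr_def hasse_deriv_mult_if_pderiv_eq_0)
  finally show ?thesis by simp
qed

text \<open>A common root of the numerators and the denominator could be cancelled as a factor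
  \<open>(X - a)\<^sup>q\<close>, so a denominator of least degree has none.\<close>
lemma const_repr_min_degree_no_common_root:
  fixes G :: "'a poly list"
  assumes repr: "const_repr G h \<delta> \<nu>"
    and min: "\<And>\<delta>' \<nu>'. const_repr G h \<delta>' \<nu>' \<Longrightarrow> degree \<delta> \<le> degree \<delta>'"
    and "poly \<delta> a = 0"
  shows "\<exists>j<length G. poly (\<nu> j) a \<noteq> 0"
proof (rule ccontr)
  assume "\<not> ?thesis"
  with repr obtain \<nu>' where \<nu>': "\<And>j. j < length G \<Longrightarrow> \<nu> j = [:-a, 1:] ^ q * \<nu>' j \<and> pderiv (\<nu>' j) = 0"
    using common_root_power_factor[of "length G" \<nu> a] by (auto simp: const_repr_def)
  obtain \<delta>' where \<delta>': "\<delta> = [:-a, 1:] ^ q * \<delta>'" "pderiv \<delta>' = 0"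
    using pderiv_eq_0_imp_root_power_factor repr \<open>poly \<delta> a = 0\<close> by (auto simp: const_repr_def)
  have "[:-a, 1:] ^ q * (\<delta>' * h) = [:-a, 1:] ^ q * (\<Sum>j\<in>{0..<length G}. \<nu>' j * G ! j)"
    using repr \<nu>' \<delta>'(1) by (simp add: const_repr_def sum_distrib_left mult.assoc)
  then have "const_repr G h \<delta>' \<nu>'"
    using repr \<nu>' \<delta>' by (auto simp: const_repr_def)
  then have "degree \<delta> \<le> degree \<delta>'" by (rule min)
  moreover have "\<delta>' \<noteq> 0" using repr \<delta>'(1) by (auto simp: const_repr_def)
  then have "degree \<delta> = q + degree \<delta>'"
    by (simp add: \<delta>'(1) degree_mult_eq degree_linear_power)
  ultimately show False using prime_gt_0_nat[OF prime_q] by simp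
qed

text \<open>Cramer's rule applied to \<open>\<delta> h\<^bsup>[l]\<^esup> = \<Sum>\<^sub>j \<nu>\<^sub>j G\<^sub>j\<^bsup>[l]\<^esup>\<close> (\<open>l < length G\<close>), whose right-hand
  sides are divisible by \<open>(X - a)\<^bsup>M - length G + 1\<^esup>\<close>.\<close>
lemma order_hasse_wronskian_ge:
  fixes G :: "'a poly list"
  assumes W_nonzero: "hasse_wronskian G \<noteq> 0" and repr: "const_repr G h \<delta> \<nu>"
    and "length G \<le> M" "length G < q" and "[:-a, 1:] ^ M dvd h"
    and "j0 < length G" "poly (\<nu> j0) a \<noteq> 0"
  shows "M - length G + 1 \<le> order a (hasse_wronskian G)"
proof -
  define r where "r = length G"
  have "[:-a, 1:] ^ (M - r + 1) dvd vec r \<nu> $ j0 * hasse_wronskian G"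
    unfolding hasse_wronskian_def
  proof (rule dvd_mult_det_if_dvd_mult_vec[OF hasse_wronskian_mat_carrier])
    fix l assume "l < length G"
    have "(hasse_wronskian_mat G *\<^sub>v vec r \<nu>) $ l = \<delta> * hasse_deriv l h"
      using const_repr_hasse_deriv[OF repr] \<open>l < length G\<close> assms(4)
      by (simp add: hasse_wronskian_mat_mult_vec r_def)
    moreover have "[:-a, 1:] ^ (M - r + 1) dvd [:-a, 1:] ^ (M - l)"
      using \<open>l < length G\<close> assms(3) by (intro le_imp_power_dvd) (simp add: r_def)
    ultimately show "[:-a, 1:] ^ (M - r + 1) dvd (hasse_wronskian_mat G *\<^sub>v vec r \<nu>) $ l"
      using power_dvd_hasse_deriv[OF assms(5), of l] by (metis dvd_mult dvd_trans)
  qed (use assms(6) in \<open>simp_all add: r_def\<close>)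
  then have "\<nu> j0 * hasse_wronskian G = 0 \<or> M - r + 1 \<le> order a (\<nu> j0 * hasse_wronskian G)"
    using assms(6) by (simp only: order_divides index_vec r_def)
  moreover have "\<nu> j0 \<noteq> 0" "order a (\<nu> j0) = 0" using assms(7) order_root by auto
  ultimately show ?thesis using W_nonzero by (simp add: order_mult r_def)
qed

lemma order_ge_char_if_numerators_vanish:
  fixes G :: "'a poly list"
  assumes repr: "const_repr G h \<delta> \<nu>" and "h \<noteq> 0" and "poly \<delta> a \<noteq> 0"
    and "\<And>j. j < length G \<Longrightarrow> poly (\<nu> j) a = 0"
  shows "q \<le> order a h"
proof -
  obtain g where g: "\<And>j. j < length G \<Longrightarrow> \<nu> j = [:-a, 1:] ^ q * g j \<and> pderiv (g j) = 0"
    using common_root_power_factor[of "length G" \<nu> a] repr assms(4) by (auto simp: const_repr_def)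
  have "\<delta> * h = [:-a, 1:] ^ q * (\<Sum>j\<in>{0..<length G}. g j * G ! j)"
    using repr g by (simp add: const_repr_def sum_distrib_left mult.assoc)
  then have "[:-a, 1:] ^ q dvd \<delta> * h" by (metis dvd_triv_left)
  moreover have "\<delta> \<noteq> 0" using repr by (simp add: const_repr_def)
  ultimately have "q \<le> order a (\<delta> * h)"
    using \<open>h \<noteq> 0\<close> order_divides by (metis mult_eq_0_iff)
  also have "\<dots> = order a h"
    using \<open>\<delta> \<noteq> 0\<close> \<open>h \<noteq> 0\<close> \<open>poly \<delta> a \<noteq> 0\<close> by (simp add: order_mult order_root)
  finally show ?thesis .
qed

lemma high_order_roots_subset:
  fixes G :: "'a poly list"
  assumes W_nonzero: "hasse_wronskian G \<noteq> 0" and "const_repr G h \<delta>0 \<nu>0" and "h \<noteq> 0"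
    and "length G \<le> M" and "length G < q"
  shows "{a. M \<le> order a h}
           \<subseteq> {a. q \<le> order a h} \<union> {a. M - length G + 1 \<le> order a (hasse_wronskian G)}"
proof
  obtain \<delta> \<nu> where repr: "const_repr G h \<delta> \<nu>"
    and min: "\<And>\<delta>' \<nu>'. const_repr G h \<delta>' \<nu>' \<Longrightarrow> degree \<delta> \<le> degree \<delta>'"
    using ex_has_least_nat[of "\<lambda>(\<delta>, \<nu>). const_repr G h \<delta> \<nu>" "(\<delta>0, \<nu>0)" "\<lambda>(\<delta>, \<nu>). degree \<delta>"]
      assms(2) by auto
  fix a assume "a \<in> {a. M \<le> order a h}"
  then have "[:-a, 1:] ^ M dvd h" by (simp add: order_divides)
  show "a \<in> {a. q \<le> order a h} \<union> {a. M - length G + 1 \<le> order a (hasse_wronskian G)}"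
  proof (cases "\<exists>j<length G. poly (\<nu> j) a \<noteq> 0")
    case True
    then show ?thesis
      using order_hasse_wronskian_ge[OF W_nonzero repr assms(4,5) \<open>[:-a, 1:] ^ M dvd h\<close>] by blast
  next
    case False
    then have "poly \<delta> a \<noteq> 0"
      using const_repr_min_degree_no_common_root[of G h \<delta> \<nu> a] repr min by blast
    then show ?thesis
      using order_ge_char_if_numerators_vanish[OF repr \<open>h \<noteq> 0\<close>] False by blast
  qed
qed

end

section \<open>Counting roots of high multiplicity\<close>

lemma card_mult_le_degree_if_order_ge:
  fixes p :: "'a::idom poly"
  assumes "finite T" "p \<noteq> 0" "\<And>a. a \<in> T \<Longrightarrow> n \<le> order a p"
  shows "card T * n \<le> degree p"
  using assms
proof (induct T arbitrary: p rule: finite_induct)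
  case (insert a T)
  have "[:-a, 1:] ^ n dvd p" using insert.prems by (simp add: order_divides)
  then obtain p' where p': "p = [:-a, 1:] ^ n * p'" by (elim dvdE)
  have "p' \<noteq> 0" using insert.prems(1) p' by auto
  have "order b p' = order b p" if "b \<in> T" for b
  proof -
    have "order b ([:-a, 1:] ^ n) = 0"
      using that insert.hyps(2) by (intro order_0I) auto
    then show ?thesis using insert.prems(1) p' by (simp add: order_mult)
  qed
  then have "card T * n \<le> degree p'"
    using insert.prems(2) \<open>p' \<noteq> 0\<close> by (intro insert.hyps(3)) auto
  moreover have "degree p = n + degree p'"
    using p' \<open>p' \<noteq> 0\<close> by (simp add: degree_mult_eq degree_linear_power)
  ultimately show ?case using insert.hyps(1,2) by simp
qed simp

lemma sum_lessThan_card_le_sum: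
  fixes N :: "nat set"
  assumes "finite N"
  shows "(\<Sum>l<card N. l) \<le> \<Sum>N"
  using assms
proof (induct "card N" arbitrary: N)
  case (Suc n)
  define m where "m = Max N"
  have "N \<noteq> {}" using Suc.hyps(2) by auto
  then have "m \<in> N" using Suc.prems by (simp add: m_def)
  have "N \<subseteq> {0..m}" using Suc.prems by (auto simp: m_def)
  then have "n \<le> m" using card_mono[of "{0..m}" N] Suc.hyps(2) by simp
  have "card (N - {m}) = n" using Suc.hyps(2) \<open>m \<in> N\<close> Suc.prems by simp
  then have "(\<Sum>l<n. l) \<le> \<Sum>(N - {m})"
    using Suc.hyps(1)[of "N - {m}"] Suc.prems by simp
  moreover have "\<Sum>N = m + \<Sum>(N - {m})" using Suc.prems \<open>m \<in> N\<close> by (simp add: sum.remove)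
  ultimately show ?case using \<open>n \<le> m\<close> Suc.hyps(2)[symmetric] by simp
qed simp

lemma sum_lessThan_length_le_sum_list:
  "distinct J \<Longrightarrow> (\<Sum>l<length J. l) \<le> sum_list (J :: nat list)"
  using sum_lessThan_card_le_sum[of "set J"] by (simp add: distinct_card distinct_sum_list_conv_Sum)

lemma double_sum_lessThan: "2 * (\<Sum>l<r. l) = r * (r - 1)" for r :: nat
  by (induct r) (auto simp: algebra_simps)

text \<open>The final counting: \<open>s\<close> roots of multiplicity \<open>\<ge> M\<close>, fewer than \<open>c\<close> of them of
  multiplicity \<open>\<ge> q\<close> and the others among the \<open>a\<close> roots of the Wronskian (of degree \<open>d\<close>)
  of multiplicity \<open>\<ge> M - r + 1\<close>.\<close>
lemma root_count_arith:
  fixes s e a d r c k M :: nat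
  assumes "s \<le> e + a" "e < c" "a * (M - r + 1) \<le> d" "d + r * (r - 1) \<le> r * (k + c - 2)"
    and "r \<le> c" "c < k" "c < M"
  shows "(int s - int c) * (int M - int c + 1) \<le> int c * int k"
proof (cases "s \<le> c")
  case True
  then have "(int s - int c) * (int M - int c + 1) \<le> 0"
    using assms(7) by (intro mult_nonpos_nonneg) auto
  moreover have "0 \<le> int c * int k" by simp
  ultimately show ?thesis by linarith
next
  case False
  have "(int s - int c) * (int M - int c + 1) \<le> (int s - int c + 1) * (int M - int r + 1)"
    using False assms(5,7) by (intro mult_mono) auto
  also have "\<dots> \<le> int a * (int M - int r + 1)"
    using assms(1,2,5,7) by (intro mult_right_mono) auto
  also have "\<dots> = int a * int (M - r + 1)"
    using assms(5,7) by (simp add: of_nat_diff)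
  also have "\<dots> \<le> int d"
    using assms(3) by (simp only: of_nat_le_iff flip: of_nat_mult)
  also have "\<dots> \<le> int (r * (k + c - 2)) - int (r * (r - 1))"
    using assms(4) by linarith
  also have "\<dots> = int r * (int k + int c - 2) - int r * (int r - 1)"
  proof -
    have "int (k + c - 2) = int k + int c - 2" using assms(2,6) by simp
    moreover have "int r * int (r - 1) = int r * (int r - 1)" by (cases r) auto
    ultimately show ?thesis by (simp only: of_nat_mult)
  qed
  also have "\<dots> \<le> int c * int k"
  proof -
    have "int r * (int c - 1 - int r) \<le> int k * (int c - 1 - int r)" if "r < c"
      using that assms(5,6) by (intro mult_right_mono) auto
    then show ?thesis using assms(5) by (cases "r = c") (auto simp: algebra_simps)
  qed
  finally show ?thesis .
qed

locale low_pdeg_poly =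
  fixes A :: "'a::{field,finite} poly" and q c k :: nat
  assumes prime_q: "prime q" and card_UNIV: "card (UNIV :: 'a set) = q"
    and c_less_q: "c < q"
    and A_nonzero: "A \<noteq> 0" and degree_A: "degree A < c * q"
    and pdeg_A: "pdeg q A < k"
begin

lemma CHAR_eq: "CHAR('a) = q"
  using CHAR_finite_field[OF prime_q card_UNIV] .

lemma two_le_q: "2 \<le> q"
  using prime_ge_2_nat[OF prime_q] .

text \<open>The digits \<open>B\<^sub>j\<close> of the \<open>\<Lambda>\<close>-adic expansion \<open>A = \<Sum>\<^sub>j B\<^sub>j \<Lambda>\<^sup>j\<close>.\<close>
definition lam_digit :: "nat \<Rightarrow> 'a poly" where
  "lam_digit j = (A div Lam q ^ j) mod Lam q"

lemma A_div_Lam_power_eq_0: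
  assumes "c \<le> j"
  shows "A div Lam q ^ j = 0"
proof -
  have "c * q \<le> j * q" using assms by simp
  then have "degree A < j * q" using degree_A by linarith
  then have "degree A < degree (Lam q ^ j :: 'a poly)"
    using two_le_q by (simp add: degree_power_eq Lam_nonzero degree_Lam mult.commute)
  then show ?thesis by (rule div_poly_less)
qed

lemma lam_digit_eq_0: "c \<le> j \<Longrightarrow> lam_digit j = 0"
  by (simp add: lam_digit_def A_div_Lam_power_eq_0)

lemma A_eq_sum_lam_digit: "A = (\<Sum>j<c. lam_digit j * Lam q ^ j)"
  using poly_adic_expansion[of A "Lam q" c] A_div_Lam_power_eq_0[of c]
  by (simp add: lam_digit_def)

lemma degree_lam_digit_less_q: "degree (lam_digit j) < q"
  unfolding lam_digit_def by (rule degree_mod_Lam_less[OF two_le_q])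

lemma pseudo_deriv_eq_sum_lam_digit:
  assumes "l < q"
  shows "pseudo_deriv q l A = (\<Sum>j\<le>l. (-1) ^ j * hasse_deriv (l - j) (lam_digit j))"
    (is "_ = ?Y")
proof -
  have Y_eq: "?Y = (\<Sum>j<c. if j \<le> l then (-1) ^ j * hasse_deriv (l - j) (lam_digit j) else 0)"
    by (rule sum.mono_neutral_cong) (auto simp: lam_digit_eq_0 not_less)
  have "hasse_deriv l A - ?Y = (\<Sum>j<c. hasse_deriv l (Lam q ^ j * lam_digit j)
      - (if j \<le> l then (-1) ^ j * hasse_deriv (l - j) (lam_digit j) else 0))"
    by (subst A_eq_sum_lam_digit)
      (simp add: Y_eq hasse_deriv_sum sum_subtractf mult.commute)
  also have "Lam q dvd \<dots>"
    using assms by (intro dvd_sum Lam_dvd_hasse_deriv_Lam_power_mult[OF prime_q CHAR_eq])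
  finally have "pseudo_deriv q l A = ?Y mod Lam q"
    by (simp add: pseudo_deriv_def mod_eq_dvd_iff)
  moreover have "degree ?Y < degree (Lam q :: 'a poly)"
  proof -
    have "degree (hasse_deriv m (lam_digit j)) \<le> q - 1" for m j
      using degree_hasse_deriv_le[of m "lam_digit j"] degree_lam_digit_less_q[of j] by linarith
    then have "degree ?Y \<le> q - 1"
      by (intro degree_sum_le) (simp_all add: degree_neg_one_power_mult)
    then show ?thesis using degree_Lam[OF two_le_q, where 'a='a] two_le_q by simp
  qed
  ultimately show ?thesis by (simp add: mod_poly_less)
qed

lemma degree_lam_digit_less_k: "degree (lam_digit j) < k"
proof (induct j rule: less_induct)
  case (less j)
  show ?case
  proof (cases "j < c")
    case True
    define S where "S = (\<Sum>i<j. (-1) ^ i * hasse_deriv (j - i) (lam_digit i))"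
    have "degree (hasse_deriv m (lam_digit i)) \<le> k - 1" if "i < j" for m i
      using degree_hasse_deriv_le[of m "lam_digit i"] less[OF that] by linarith
    then have "degree S \<le> k - 1"
      unfolding S_def by (intro degree_sum_le) (simp_all add: degree_neg_one_power_mult)
    moreover have "degree (pseudo_deriv q j A) \<le> k - 1"
      using degree_pseudo_deriv_le_pdeg[OF two_le_q, of j A] pdeg_A by linarith
    moreover have "lam_digit j = (-1) ^ j * (pseudo_deriv q j A - S)"
      using pseudo_deriv_eq_sum_lam_digit[of j] True c_less_q
      by (simp add: S_def lessThan_Suc_atMost[symmetric] flip: mult.assoc power_mult_distrib)
    then have "degree (lam_digit j) = degree (pseudo_deriv q j A - S)"
      by (simp only: degree_neg_one_power_mult)
    ultimately have "degree (lam_digit j) \<le> k - 1"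
      using degree_diff_le by metis
    then show ?thesis using pdeg_A by linarith
  qed (use pdeg_A in \<open>simp add: lam_digit_eq_0\<close>)
qed

lemma card_high_order_roots_less_k:
  assumes "c \<le> M"
  shows "card {a. M \<le> order a A} < k"
proof -
  have "\<exists>j. lam_digit j \<noteq> 0"
    using A_nonzero A_eq_sum_lam_digit by (metis (no_types, lifting) mult_zero_left sum.neutral)
  then obtain j0 where j0: "lam_digit j0 \<noteq> 0" "\<And>i. i < j0 \<Longrightarrow> lam_digit i = 0"
    using exists_least_iff[of "\<lambda>j. lam_digit j \<noteq> 0"] by blast
  have "j0 < c" using j0(1) lam_digit_eq_0 not_less by blast
  then have "j0 < q" using c_less_q by simp
  have pseudo_eq: "pseudo_deriv q j0 A = (-1) ^ j0 * lam_digit j0"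
    using pseudo_deriv_eq_sum_lam_digit[OF \<open>j0 < q\<close>] j0(2)
    by (simp add: lessThan_Suc_atMost[symmetric])
  have "{a. M \<le> order a A} \<subseteq> {a. poly (pseudo_deriv q j0 A) a = 0}"
    using poly_hasse_deriv_eq_0[OF A_nonzero] poly_pseudo_deriv[OF card_UNIV] \<open>j0 < c\<close> assms
    by auto
  then have "card {a. M \<le> order a A} \<le> card {a. poly (pseudo_deriv q j0 A) a = 0}"
    by (intro card_mono) auto
  also have "\<dots> \<le> degree (pseudo_deriv q j0 A)"
    using j0(1) pseudo_eq by (intro card_poly_roots_bound) simp
  also have "\<dots> < k"
    using degree_pseudo_deriv_le_pdeg[OF two_le_q] pdeg_A le_less_trans by blast
  finally show ?thesis .
qed

text \<open>The coefficients \<open>P\<^sub>i\<close> in \<open>A = \<Sum>\<^sub>i (X\<^sup>q)\<^sup>i P\<^sub>i\<close>, obtained by expanding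
  \<open>\<Lambda>\<^sup>b = (X\<^sup>q - X)\<^sup>b\<close> in the \<open>\<Lambda>\<close>-adic expansion.\<close>
definition xq_coeff :: "nat \<Rightarrow> 'a poly" where
  "xq_coeff i = (\<Sum>b<c. of_nat (b choose i) * (- [:0, 1:]) ^ (b - i) * lam_digit b)"

lemma A_eq_sum_xq_coeff: "A = (\<Sum>i<c. monom 1 q ^ i * xq_coeff i)"
proof -
  have Lam_power: "(Lam q :: 'a poly) ^ b = (\<Sum>i<c. of_nat (b choose i) * monom 1 q ^ i * (- [:0, 1:]) ^ (b - i))"
    if "b < c" for b
  proof -
    have "Lam q ^ b = (monom 1 q + - [:0, 1:] :: 'a poly) ^ b"
      by (simp only: Lam_def diff_conv_add_uminus)
    also have "\<dots> = (\<Sum>i\<le>b. of_nat (b choose i) * monom 1 q ^ i * (- [:0, 1:]) ^ (b - i))"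
      by (rule binomial_ring)
    also have "\<dots> = (\<Sum>i<c. of_nat (b choose i) * monom 1 q ^ i * (- [:0, 1:]) ^ (b - i))"
      using that by (intro sum.mono_neutral_left) (auto simp: binomial_eq_0)
    finally show ?thesis .
  qed
  have "A = (\<Sum>b<c. \<Sum>i<c. monom 1 q ^ i * (of_nat (b choose i) * (- [:0, 1:]) ^ (b - i) * lam_digit b))"
    by (subst A_eq_sum_lam_digit)
      (auto intro!: sum.cong simp: Lam_power sum_distrib_left sum_distrib_right ac_simps)
  also have "\<dots> = (\<Sum>i<c. monom 1 q ^ i * xq_coeff i)"
    by (subst sum.swap) (simp add: xq_coeff_def sum_distrib_left)
  finally show ?thesis .
qed

lemma degree_xq_coeff_le:
  assumes "i < c"
  shows "degree (xq_coeff i) \<le> k + c - 2 - i"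
  unfolding xq_coeff_def
proof (intro degree_sum_le)
  fix b assume "b \<in> {..<c}"
  show "degree (of_nat (b choose i) * (- [:0, 1:]) ^ (b - i) * lam_digit b) \<le> k + c - 2 - i"
  proof (cases "i \<le> b")
    case True
    have "degree (of_nat (b choose i) * (- [:0, 1:]) ^ (b - i) * lam_digit b :: 'a poly)
        \<le> degree (of_nat (b choose i) :: 'a poly) + degree ((- [:0, 1:]) ^ (b - i) :: 'a poly)
           + degree (lam_digit b)"
      by (intro order.trans[OF degree_mult_le] add_right_mono degree_mult_le)
    also have "\<dots> \<le> (b - i) + degree (lam_digit b)"
      using degree_power_le[of "- [:0, 1:] :: 'a poly" "b - i"] by (simp add: degree_of_nat)
    finally show ?thesis
      using degree_lam_digit_less_k[of b] \<open>b \<in> {..<c}\<close> True by simp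
  qed (simp add: binomial_eq_0)
qed simp

lemma pderiv_monom_power: "pderiv (monom 1 q ^ i :: 'a poly) = 0"
  by (simp add: pderiv_power pderiv_monom of_nat_eq_0_iff_dvd[OF prime_q CHAR_eq])

lemma const_repr_A_if_const_repr_xq_coeff:
  assumes "\<And>m. m < c \<Longrightarrow> \<exists>\<delta> \<nu>. const_repr G (xq_coeff m) \<delta> \<nu>"
  shows "\<exists>\<delta> \<nu>. const_repr G A \<delta> \<nu>"
proof -
  have "\<exists>\<delta> \<nu>. const_repr G (\<Sum>i<n. monom 1 q ^ i * xq_coeff i) \<delta> \<nu>" if "n \<le> c" for n
    using that
  proof (induct n)
    case 0
    then show ?case using const_repr_0 by auto
  next
    case (Suc n)
    then obtain \<delta>1 \<nu>1 \<delta>2 \<nu>2 where "const_repr G (\<Sum>i<n. monom 1 q ^ i * xq_coeff i) \<delta>1 \<nu>1"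
      and "const_repr G (xq_coeff n) \<delta>2 \<nu>2"
      using assms by (metis Suc_le_lessD Suc_leD)
    then show ?case
      using const_repr_add const_repr_const_mult[OF pderiv_monom_power] by fastforce
  qed
  then show ?thesis using A_eq_sum_xq_coeff by (metis order_refl)
qed

lemma exists_wronskian_basis:
  obtains J where "distinct J" "set J \<subseteq> {..<c}" "hasse_wronskian (map xq_coeff J) \<noteq> 0"
    and "\<exists>\<delta> \<nu>. const_repr (map xq_coeff J) A \<delta> \<nu>"
proof -
  define admissible where "admissible J \<longleftrightarrow>
    distinct J \<and> set J \<subseteq> {..<c} \<and> hasse_wronskian (map xq_coeff J) \<noteq> 0" for J
  have "length J < Suc c" if "admissible J" for J
    using that distinct_card[of J] card_mono[of "{..<c}" "set J"] by (simp add: admissible_def)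
  moreover have "admissible []" by (simp add: admissible_def hasse_wronskian_Nil)
  ultimately obtain J where J: "admissible J"
    and maximal: "\<And>J'. admissible J' \<Longrightarrow> length J' \<le> length J"
    using ex_has_greatest_nat[of admissible "[]" length "Suc c"] by blast
  define G where "G = map xq_coeff J"
  have repr_xq_coeff: "\<exists>\<delta> \<nu>. const_repr G (xq_coeff m) \<delta> \<nu>" if "m < c" for m
  proof (cases "m \<in> set J")
    case True
    then obtain i where "i < length J" "J ! i = m" by (auto simp: in_set_conv_nth)
    then show ?thesis using const_repr_nth[of i G] by (auto simp: G_def)
  next
    case False
    then have "\<not> admissible (J @ [m])" using maximal[of "J @ [m]"] by auto
    then have "hasse_wronskian (G @ [xq_coeff m]) = 0"
      using J False \<open>m < c\<close> by (auto simp: admissible_def G_def)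
    then show ?thesis
      using const_repr_if_hasse_wronskian_append_eq_0[OF prime_q CHAR_eq] J
      by (simp add: admissible_def G_def)
  qed
  then have "\<exists>\<delta> \<nu>. const_repr G A \<delta> \<nu>" by (rule const_repr_A_if_const_repr_xq_coeff)
  with J show ?thesis by (intro that[of J]) (auto simp: admissible_def G_def)
qed

lemma degree_hasse_wronskian_xq_coeff:
  assumes "distinct J" "set J \<subseteq> {..<c}" and W_nonzero: "hasse_wronskian (map xq_coeff J) \<noteq> 0"
  shows "degree (hasse_wronskian (map xq_coeff J)) + length J * (length J - 1)
           \<le> length J * (k + c - 2)"
proof -
  define r where "r = length J"
  have J_less: "J ! j < c" if "j < r" for j
    using assms(2) that nth_mem unfolding r_def by blast
  have "degree (hasse_wronskian (map xq_coeff J)) + (\<Sum>l<r. l) \<le> (\<Sum>j<r. k + c - 2 - J ! j)"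
    using degree_hasse_wronskian_le[OF W_nonzero] degree_xq_coeff_le J_less
    by (simp add: r_def)
  also have "(\<Sum>j<r. k + c - 2 - J ! j) = r * (k + c - 2) - sum_list J"
  proof -
    have "(\<Sum>j<r. k + c - 2 - J ! j) + sum_list J = (\<Sum>j<r. (k + c - 2 - J ! j) + J ! j)"
      by (simp add: sum_list_sum_nth r_def atLeast0LessThan sum.distrib)
    also have "\<dots> = (\<Sum>j<r. k + c - 2)"
      using J_less pdeg_A by (intro sum.cong) fastforce+
    finally have "(\<Sum>j<r. k + c - 2 - J ! j) + sum_list J = r * (k + c - 2)" by simp
    then show ?thesis by simp
  qed
  finally show ?thesis
    using sum_lessThan_length_le_sum_list[OF assms(1)] double_sum_lessThan[of r]
    by (simp add: r_def)
qed

lemma card_high_order_roots_bound: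
  assumes "c < M" "M < q"
  shows "(int (card {a. M \<le> order a A}) - int c) * (int M - int c + 1) \<le> int c * int k"
proof (cases "c < k")
  case False
  then have "card {a. M \<le> order a A} \<le> c"
    using card_high_order_roots_less_k[OF less_imp_le[OF assms(1)]] False by linarith
  then have "(int (card {a. M \<le> order a A}) - int c) * (int M - int c + 1) \<le> 0"
    using assms(1) by (intro mult_nonpos_nonneg) auto
  moreover have "0 \<le> int c * int k" by simp
  ultimately show ?thesis by linarith
next
  case True
  obtain J where J: "distinct J" "set J \<subseteq> {..<c}" "hasse_wronskian (map xq_coeff J) \<noteq> 0"
    and repr: "\<exists>\<delta> \<nu>. const_repr (map xq_coeff J) A \<delta> \<nu>"
    by (rule exists_wronskian_basis)
  define r where "r = length J"
  define W where "W = hasse_wronskian (map xq_coeff J)"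
  define E where "E = {a. q \<le> order a A}"
  define R where "R = {a. M - r + 1 \<le> order a W}"
  have "r \<le> c"
    using J distinct_card[of J] card_mono[of "{..<c}" "set J"] by (simp add: r_def)
  obtain \<delta> \<nu> where "const_repr (map xq_coeff J) A \<delta> \<nu>" using repr by blast
  moreover have "length (map xq_coeff J) \<le> M" "length (map xq_coeff J) < q"
    using \<open>r \<le> c\<close> assms by (simp_all add: r_def)
  ultimately have "{a. M \<le> order a A} \<subseteq> E \<union> R"
    using high_order_roots_subset[OF prime_q CHAR_eq J(3) _ A_nonzero]
    by (simp add: E_def R_def W_def r_def)
  then have "card {a. M \<le> order a A} \<le> card E + card R"
    by (meson card_Un_le card_mono finite order_trans)
  moreover have "card E * q \<le> degree A"
    using A_nonzero by (intro card_mult_le_degree_if_order_ge) (auto simp: E_def)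
  then have "card E < c" using degree_A by (meson le_less_trans mult_less_cancel2)
  moreover have "card R * (M - r + 1) \<le> degree W"
    using J(3) by (intro card_mult_le_degree_if_order_ge) (auto simp: R_def W_def)
  moreover have "degree W + r * (r - 1) \<le> r * (k + c - 2)"
    using degree_hasse_wronskian_xq_coeff[OF J] by (simp add: W_def r_def)
  ultimately show ?thesis
    using root_count_arith \<open>r \<le> c\<close> True assms(1) by blast
qed

end

theorem theorem5p4:
  fixes A :: "'a::{field,finite} poly"
    and q c k M :: nat
  assumes "prime q" and "card (UNIV :: 'a set) = q"
    and "0 < c" and "0 < k" and "0 < M"
    and "c < M" and "M < q"
    and "A \<noteq> 0"
    and "degree A < c * q"
    and "pdeg q A < k"
  shows "real (card {\<alpha>::'a. order \<alpha> A \<ge> M})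
           \<le> min (real c / real (M - c + 1) * real k + real c) (real k)"
proof -
  interpret low_pdeg_poly A q c k
    using assms by unfold_locales auto
  define s where "s = card {\<alpha>::'a. order \<alpha> A \<ge> M}"
  have "s < k"
    using card_high_order_roots_less_k assms(6) by (simp add: s_def)
  have "(int s - int c) * (int M - int c + 1) \<le> int c * int k"
    using card_high_order_roots_bound[OF assms(6,7)] by (simp add: s_def)
  then have "(real s - real c) * (real M - real c + 1) \<le> real c * real k"
    by (metis (mono_tags) of_int_le_iff of_int_mult of_int_diff of_int_add of_int_1
        of_int_of_nat_eq)
  moreover have M_c: "real (M - c + 1) = real M - real c + 1" using assms(6) by (simp add: of_nat_diff)
  ultimately have "(real s - real c) * real (M - c + 1) \<le> real c * real k"
    by (simp only: M_c)
  then have "real s - real c \<le> real c * real k / real (M - c + 1)"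
    by (subst pos_le_divide_eq) auto
  then have "real s \<le> real c / real (M - c + 1) * real k + real c" by simp
  with \<open>s < k\<close> show ?thesis by (simp add: s_def)
qed

end
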